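(* Let $N\ge 3$ be odd, $p<0$, and let $0\le r_1<r_2<\dots<r_N\le 1$ be distinct points. Define $\sigma\in S_N$ by $\sigma(1)=1$, $\sigma(i)=\frac{N-i+3}{2}$ for even $i>1$, and $\sigma(i)=\frac{2N-i+3}{2}$ for odd $i>1$. Then $h^*=h[\sigma]$ is an optimal Hamiltonian cycle: $E(h^* )\le E(h)$ for every Hamiltonian cycle $h$. (In $h^*$ each vertex $r_a$ is adjacent to $r_{a+(N-1)/2}$ and $r_{a+(N+1)/2}$, indices taken mod $N$ in $\{1,\dots,N\}$.)
   Context: The points are the vertices of the complete graph $\mathcal K_N$. For $p\in\mathbb R$ the weight of the edge $\{r_i,r_j\}$ is $w_{ij}=|r_i-r_j|^p$, and the cost of a Hamiltonian cycle $h$ is $E(h)=\sum_{e\in h}w_e$. For $\sigma\in S_N$, $h[\sigma]$ denotes the Hamiltonian cycle with edges $\{r_{\sigma(i)},r_{\sigma(i+1)}\}$, $i=1,\dots,N$, with $\sigma(N+1):=\sigma(1)$. *)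

theory Defs
  imports "HOL-Analysis.Analysis" "HOL-Combinatorics.Permutations"
begin

(* Points r_1,...,r_N are given as r :: nat => real, used on indices 1..N.
   Edge weight w_ij = |r_i - r_j|^p (real exponent p). *)
definition edge_weight :: "real \<Rightarrow> (nat \<Rightarrow> real) \<Rightarrow> nat \<Rightarrow> nat \<Rightarrow> real" where
  "edge_weight p r i j = \<bar>r i - r j\<bar> powr p"

definition cycle_cost :: "nat \<Rightarrow> real \<Rightarrow> (nat \<Rightarrow> real) \<Rightarrow> (nat \<Rightarrow> nat) \<Rightarrow> real" where
  "cycle_cost N p r \<sigma> =
     (\<Sum>i = 1..N. edge_weight p r (\<sigma> i) (\<sigma> (if i = N then 1 else i + 1)))"

(* The permutation sigma from the statement (on {1..N}; identity elsewhere,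
   as required by Isabelle's 'permutes'). *)
definition sigma_star :: "nat \<Rightarrow> nat \<Rightarrow> nat" where
  "sigma_star N i = (if i < 1 \<or> N < i then i
                     else if i = 1 then 1
                     else if even i then (N - i + 3) div 2
                     else (2 * N - i + 3) div 2)"

end

theory Submission
  imports Defs
begin

text \<open>Write \<open>F a b\<close> for the weight of the edge between the \<open>a\<close>-th and \<open>b\<close>-th point
  (\<open>a < b\<close>). The weight of any edge \<open>{u, v}\<close> with \<open>u < v\<close> is the sum of the mixed second
  differences \<open>F a b - F (a-1) b - F a (b+1) + F (a-1) (b+1)\<close> over all intervals
  \<open>[a, b] \<supseteq> [u, v]\<close>, and these differences are nonnegative because \<open>x powr p\<close> is
  convex, decreasing and positive for \<open>p < 0\<close>. Hence the cost of a Hamiltonian cycle is a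
  nonnegative combination of the numbers of its edges lying inside \<open>[a, b]\<close>. Counting vertex
  incidences, every cycle has at least \<open>2(b - a + 1) - N\<close> such edges, and the cycle of
  \<open>sigma_star N\<close>, whose edges join points \<open>(N-1)/2\<close> or \<open>(N+1)/2\<close> apart, attains this
  bound for every interval.\<close>

lemma powr_convex_nonpos:
  fixes p :: real
  assumes "p \<le> 0" shows "convex_on {0<..} (\<lambda>x. x powr p)"
proof (rule f''_ge0_imp_convex)
  show "((\<lambda>x. x powr p) has_real_derivative p * x powr (p - 1)) (at x)" if "x \<in> {0<..}" for x
    using that by (auto intro!: derivative_eq_intros)
  show "((\<lambda>x. p * x powr (p - 1)) has_real_derivative p * ((p - 1) * x powr (p - 2))) (at x)"
    if "x \<in> {0<..}" for x
    using that by (auto intro!: derivative_eq_intros simp: diff_diff_eq)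
  show "0 \<le> p * ((p - 1) * x powr (p - 2))" for x
    using assms by (intro mult_nonpos_nonpos) (auto intro: mult_nonpos_nonneg)
qed simp

lemma convex_on_four_point:
  fixes f :: "real \<Rightarrow> real"
  assumes "convex_on {x..x+a+b} f" "0 \<le> a" "0 \<le> b"
  shows "f (x+a) + f (x+b) \<le> f x + f (x+a+b)"
proof (cases "a + b = 0")
  case True
  with assms have "a = 0" "b = 0" by linarith+
  then show ?thesis by simp
next
  case False
  define s where "s = (f (x+a+b) - f x) / (a + b)"
  have "f (x+a) \<le> s * a + f x" "f (x+b) \<le> s * b + f x"
    using convex_onD_Icc'[OF assms(1), of "x+a"] convex_onD_Icc'[OF assms(1), of "x+b"] assms
    by (simp_all add: s_def add.assoc)
  moreover have "s * a + s * b = f (x+a+b) - f x"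
  proof -
    have "s * a + s * b = s * (a + b)" by (simp add: algebra_simps)
    then show ?thesis using False by (simp add: s_def)
  qed
  ultimately show ?thesis by linarith
qed

definition interval_weight :: "nat \<Rightarrow> (nat \<Rightarrow> nat \<Rightarrow> real) \<Rightarrow> nat \<Rightarrow> nat \<Rightarrow> real" where
  "interval_weight N w a b = (if 1 \<le> a \<and> a < b \<and> b \<le> N then w a b else 0)"

definition mixed_diff :: "(nat \<Rightarrow> nat \<Rightarrow> real) \<Rightarrow> nat \<Rightarrow> nat \<Rightarrow> real" where
  "mixed_diff F a b = F a b - F (a - 1) b - F a (Suc b) + F (a - 1) (Suc b)"

lemma sum_mixed_diff_telescope:
  assumes "\<And>b. F 0 b = 0" "\<And>a. F a (Suc N) = 0" "v \<le> Suc N"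
  shows "(\<Sum>a = 1..u. \<Sum>b = v..N. mixed_diff F a b) = F u v"
proof -
  have inner: "(\<Sum>b = v..N. mixed_diff F a b) = F a v - F (a - 1) v" for a
  proof -
    let ?G = "\<lambda>b. F a b - F (a - 1) b"
    have "(\<Sum>b = v..N. mixed_diff F a b) = - (\<Sum>b = v..N. ?G (Suc b) - ?G b)"
      by (simp add: mixed_diff_def sum_negf[symmetric] algebra_simps)
    also have "\<dots> = ?G v" using sum_Suc_diff[OF assms(3), of ?G] assms(2) by simp
    finally show ?thesis .
  qed
  have "(\<Sum>a = 1..u. F a v - F (a - 1) v) = F u v"
    using assms(1) by (induction u) (simp_all add: sum.cl_ivl_Suc)
  with inner show ?thesis by simp
qed

lemma interval_weight_eq_sum_mixed_diff:
  assumes sym: "\<And>i j. w i j = w j i" and uv: "u \<in> {1..N}" "v \<in> {1..N}" "u \<noteq> v"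
  shows "w u v = (\<Sum>a = 1..N. \<Sum>b \<in> {a<..N}.
           if u \<in> {a..b} \<and> v \<in> {a..b} then mixed_diff (interval_weight N w) a b else 0)"
proof -
  define lo where "lo = min u v"
  define hi where "hi = max u v"
  have lohi: "1 \<le> lo" "lo < hi" "hi \<le> N" using uv by (auto simp: lo_def hi_def)
  let ?\<mu> = "mixed_diff (interval_weight N w)"
  have inner: "(\<Sum>b \<in> {a<..N}. if u \<in> {a..b} \<and> v \<in> {a..b} then ?\<mu> a b else 0)
        = (if a \<le> lo then \<Sum>b = hi..N. ?\<mu> a b else 0)" (is "?inner a = _") for a
  proof (cases "a \<le> lo")
    case True
    then have "{b \<in> {a<..N}. u \<in> {a..b} \<and> v \<in> {a..b}} = {hi..N}"
      using lohi by (auto simp: lo_def hi_def)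
    with True show ?thesis by (simp add: sum.inter_filter[symmetric])
  qed (auto simp: lo_def)
  have lo_set: "{1..N} \<inter> {a. a \<le> lo} = {1..lo}"
    using lohi by auto
  have "(\<Sum>a = 1..N. ?inner a) = (\<Sum>a = 1..lo. \<Sum>b = hi..N. ?\<mu> a b)"
    by (simp only: inner sum.If_cases[OF finite_atLeastAtMost] lo_set) simp
  also have "\<dots> = interval_weight N w lo hi"
    using lohi by (intro sum_mixed_diff_telescope) (auto simp: interval_weight_def)
  also have "\<dots> = w u v"
    using lohi sym[of u v] by (auto simp: interval_weight_def lo_def hi_def)
  finally show ?thesis by simp
qed

lemma mixed_diff_interval_weight_nonneg:
  fixes f :: "real \<Rightarrow> real" and r :: "nat \<Rightarrow> real"
  assumes convex: "convex_on {0<..} f"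
    and antimono: "\<And>x y. 0 < x \<Longrightarrow> x \<le> y \<Longrightarrow> f y \<le> f x"
    and nonneg: "\<And>x. 0 < x \<Longrightarrow> 0 \<le> f x"
    and r_mono: "\<And>i j. 1 \<le> i \<Longrightarrow> i < j \<Longrightarrow> j \<le> N \<Longrightarrow> r i < r j"
    and ab: "1 \<le> a" "a < b" "b \<le> N"
  shows "0 \<le> mixed_diff (interval_weight N (\<lambda>i j. f \<bar>r i - r j\<bar>)) a b"
proof -
  define x where "x = r b - r a"
  define \<alpha> where "\<alpha> = r a - r (a - 1)"
  define \<beta> where "\<beta> = r (Suc b) - r b"
  have x: "0 < x" using r_mono[OF ab] by (simp add: x_def)
  have \<alpha>: "0 < \<alpha>" if "a \<noteq> 1" using r_mono[of "a - 1" a] ab that by (simp add: \<alpha>_def)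
  have \<beta>: "0 < \<beta>" if "b \<noteq> N" using r_mono[of b "Suc b"] ab that by (simp add: \<beta>_def)
  have dist_a: "\<bar>r (a - 1) - r b\<bar> = x + \<alpha>" "1 \<le> a - 1" if "a \<noteq> 1"
    using x \<alpha>[OF that] ab that by (auto simp: x_def \<alpha>_def)
  have dist_b: "\<bar>r a - r (Suc b)\<bar> = x + \<beta>" "Suc b \<le> N" if "b \<noteq> N"
    using x \<beta>[OF that] ab that by (auto simp: x_def \<beta>_def)
  have dist_ab: "\<bar>r (a - 1) - r (Suc b)\<bar> = x + \<alpha> + \<beta>" if "a \<noteq> 1" "b \<noteq> N"
    using x \<alpha>[OF that(1)] \<beta>[OF that(2)] by (auto simp: x_def \<alpha>_def \<beta>_def)
  have dist: "\<bar>r a - r b\<bar> = x" using x by (simp add: x_def)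
  consider "a = 1" "b = N" | "a = 1" "b \<noteq> N" | "a \<noteq> 1" "b = N" | "a \<noteq> 1" "b \<noteq> N"
    by blast
  then show ?thesis
  proof cases
    case 1
    from 1 ab dist x show ?thesis by (simp add: mixed_diff_def interval_weight_def nonneg)
  next
    case 2
    have "f (x + \<beta>) \<le> f x" using x \<beta>[OF 2(2)] by (intro antimono) auto
    with 2 ab dist dist_b[OF 2(2)] show ?thesis
      by (simp add: mixed_diff_def interval_weight_def)
  next
    case 3
    have "f (x + \<alpha>) \<le> f x" using x \<alpha>[OF 3(1)] by (intro antimono) auto
    with 3 ab dist dist_a[OF 3(1)] show ?thesis
      by (simp add: mixed_diff_def interval_weight_def)
  next
    case 4
    have "convex_on {x..x + \<alpha> + \<beta>} f"
      using x by (intro convex_on_subset[OF convex]) auto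
    from convex_on_four_point[OF this] \<alpha>[OF 4(1)] \<beta>[OF 4(2)]
    have "f (x + \<alpha>) + f (x + \<beta>) \<le> f x + f (x + \<alpha> + \<beta>)" by simp
    with 4 ab dist dist_a[OF 4(1)] dist_b[OF 4(2)] dist_ab[OF 4] show ?thesis
      by (simp add: mixed_diff_def interval_weight_def)
  qed
qed

definition cycle_next :: "nat \<Rightarrow> nat \<Rightarrow> nat" where
  "cycle_next N i = (if i = N then 1 else i + 1)"

lemma bij_betw_cycle_next:
  assumes "1 \<le> N" shows "bij_betw (cycle_next N) {1..N} {1..N}"
  unfolding bij_betw_def
proof
  show inj: "inj_on (cycle_next N) {1..N}"
    by (auto simp: inj_on_def cycle_next_def)
  have "cycle_next N ` {1..N} \<subseteq> {1..N}"
    using assms by (auto simp: cycle_next_def)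
  then show "cycle_next N ` {1..N} = {1..N}"
    using endo_inj_surj[OF _ _ inj] by simp
qed

definition edges_within :: "nat \<Rightarrow> (nat \<Rightarrow> nat) \<Rightarrow> nat \<Rightarrow> nat \<Rightarrow> nat" where
  "edges_within N g a b = card {i \<in> {1..N}. g i \<in> {a..b} \<and> g (cycle_next N i) \<in> {a..b}}"

lemma cycle_sum_eq_sum_mixed_diff:
  assumes sym: "\<And>i j. w i j = w j i" and g: "bij_betw g {1..N} {1..N}" and "2 \<le> N"
  shows "(\<Sum>i = 1..N. w (g i) (g (cycle_next N i))) =
    (\<Sum>a = 1..N. \<Sum>b \<in> {a<..N}. mixed_diff (interval_weight N w) a b * edges_within N g a b)"
proof -
  let ?\<mu> = "mixed_diff (interval_weight N w)"
  let ?inside = "\<lambda>i a b. g i \<in> {a..b} \<and> g (cycle_next N i) \<in> {a..b}"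
  have next_in: "cycle_next N i \<in> {1..N}" if "i \<in> {1..N}" for i
    using that by (auto simp: cycle_next_def)
  have g_in: "g i \<in> {1..N}" if "i \<in> {1..N}" for i
    using bij_betwE[OF g] that by blast
  have g_ne: "g i \<noteq> g (cycle_next N i)" if "i \<in> {1..N}" for i
  proof -
    have "cycle_next N i \<noteq> i" using \<open>2 \<le> N\<close> that by (auto simp: cycle_next_def)
    then show ?thesis using inj_onD[OF bij_betw_imp_inj_on[OF g] _ that next_in[OF that]] by metis
  qed
  have "(\<Sum>i = 1..N. w (g i) (g (cycle_next N i))) =
      (\<Sum>i = 1..N. \<Sum>a = 1..N. \<Sum>b \<in> {a<..N}. if ?inside i a b then ?\<mu> a b else 0)"
    using g_in next_in g_ne by (intro sum.cong refl interval_weight_eq_sum_mixed_diff[OF sym]) auto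
  also have "\<dots> = (\<Sum>a = 1..N. \<Sum>i = 1..N. \<Sum>b \<in> {a<..N}. if ?inside i a b then ?\<mu> a b else 0)"
    by (rule sum.swap)
  also have "\<dots> = (\<Sum>a = 1..N. \<Sum>b \<in> {a<..N}. \<Sum>i = 1..N. if ?inside i a b then ?\<mu> a b else 0)"
    by (rule sum.cong[OF refl sum.swap])
  also have "\<dots> = (\<Sum>a = 1..N. \<Sum>b \<in> {a<..N}. ?\<mu> a b * edges_within N g a b)"
    unfolding edges_within_def
    by (simp only: sum.inter_filter[OF finite_atLeastAtMost, symmetric] sum_constant mult.commute)
  finally show ?thesis .
qed

lemma card_preimage_bij_betw:
  assumes "bij_betw f A C" "B \<subseteq> C"
  shows "card {x \<in> A. f x \<in> B} = card B"
proof -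
  have "f ` {x \<in> A. f x \<in> B} = B"
    using assms by (auto simp: bij_betw_def)
  then have "bij_betw f {x \<in> A. f x \<in> B} B"
    by (intro bij_betw_subset[OF assms(1)]) auto
  then show ?thesis by (rule bij_betw_same_card)
qed

lemma edges_within_lower_bound:
  assumes g: "bij_betw g {1..N} {1..N}" and ab: "1 \<le> a" "a \<le> b" "b \<le> N"
  shows "2 * (Suc b - a) \<le> edges_within N g a b + N"
proof -
  define A where "A = {i \<in> {1..N}. g i \<in> {a..b}}"
  define B where "B = {i \<in> {1..N}. (g \<circ> cycle_next N) i \<in> {a..b}}"
  have "card A = Suc b - a"
    using card_preimage_bij_betw[OF g, of "{a..b}"] ab by (simp add: A_def)
  moreover have "card B = Suc b - a"
    using card_preimage_bij_betw[OF bij_betw_trans[OF bij_betw_cycle_next g], of "{a..b}"] ab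
    by (simp add: B_def)
  moreover have "card (A \<union> B) \<le> N"
    using card_mono[of "{1..N}" "A \<union> B"] by (simp add: A_def B_def subset_iff)
  moreover have "card A + card B = card (A \<union> B) + card (A \<inter> B)"
    by (rule card_Un_Int) (auto simp: A_def B_def)
  moreover have "card (A \<inter> B) = edges_within N g a b"
    unfolding edges_within_def A_def B_def by (rule arg_cong[where f = card]) auto
  ultimately show ?thesis by linarith
qed

text \<open>The cycle of \<open>sigma_star N\<close> advances by \<open>m = (N - 1) div 2\<close> modulo \<open>N\<close>
  at every step, so its edges are \<open>{x, x + m}\<close> and \<open>{x, x + m + 1}\<close>.\<close>

lemma sigma_star_cycle_next:
  assumes "N = 2*m + 1" "i \<in> {1..N}"
  shows "sigma_star N (cycle_next N i) =
    (if sigma_star N i \<le> m + 1 then sigma_star N i + m else sigma_star N i - (m + 1))"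
  using assms unfolding sigma_star_def cycle_next_def by auto

lemma sigma_star_cases:
  assumes "N = 2*m + 1" "i \<in> {1..N}"
  obtains "i = 1" "sigma_star N i = 1"
    | k where "i = 2*k" "1 \<le> k" "k \<le> m" "sigma_star N i = m + 2 - k"
    | k where "i = 2*k + 1" "1 \<le> k" "k \<le> m" "sigma_star N i = 2*m + 2 - k"
proof -
  have "i = 1 \<or> (\<exists>k. i = 2*k \<and> 1 \<le> k \<and> k \<le> m) \<or> (\<exists>k. i = 2*k + 1 \<and> 1 \<le> k \<and> k \<le> m)"
    using assms by presburger
  then consider "i = 1" | k where "i = 2*k" "1 \<le> k" "k \<le> m" | k where "i = 2*k + 1" "1 \<le> k" "k \<le> m"
    by blast
  then show ?thesis
  proof cases
    case 1
    then show ?thesis using assms that(1) by (simp add: sigma_star_def)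
  next
    case (2 k)
    have "(N - 2*k + 3) div 2 = m + 2 - k" using 2 assms(1) by presburger
    then show ?thesis using 2 assms that(2) by (simp add: sigma_star_def)
  next
    case (3 k)
    have "(2*N - (2*k + 1) + 3) div 2 = 2*m + 2 - k" using 3 assms(1) by presburger
    then show ?thesis using 3 assms that(3) by (simp add: sigma_star_def)
  qed
qed

lemma sigma_star_permutes:
  assumes "odd N" shows "sigma_star N permutes {1..N}"
proof (rule bij_imp_permutes)
  obtain m where N: "N = 2*m + 1" using assms oddE by blast
  show "bij_betw (sigma_star N) {1..N} {1..N}"
    unfolding bij_betw_def
  proof
    show inj: "inj_on (sigma_star N) {1..N}"
    proof (rule inj_onI)
      fix i j assume "i \<in> {1..N}" "j \<in> {1..N}" "sigma_star N i = sigma_star N j"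
      then show "i = j"
        by (elim sigma_star_cases[OF N, of i] sigma_star_cases[OF N, of j]) auto
    qed
    have "sigma_star N i \<in> {1..N}" if "i \<in> {1..N}" for i
      by (rule sigma_star_cases[OF N that]) (use N in auto)
    then have "sigma_star N ` {1..N} \<subseteq> {1..N}" by blast
    then show "sigma_star N ` {1..N} = {1..N}"
      using endo_inj_surj[OF _ _ inj] by simp
  qed
qed (auto simp: sigma_star_def)

lemma edges_within_sigma_star:
  assumes N: "N = 2*m + 1"
  shows "edges_within N (sigma_star N) a b \<le> (Suc b - m - a) + (b - m - a)"
proof -
  let ?\<sigma> = "sigma_star N"
  let ?S = "{i \<in> {1..N}. ?\<sigma> i \<in> {a..b} \<and> ?\<sigma> (cycle_next N i) \<in> {a..b}}"
  have "inj_on ?\<sigma> {1..N}"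
    using sigma_star_permutes[of N] N permutes_inj_on by auto
  then have "inj_on ?\<sigma> ?S"
    by (rule inj_on_subset) blast
  then have "edges_within N ?\<sigma> a b = card (?\<sigma> ` ?S)"
    unfolding edges_within_def by (rule card_image[symmetric])
  also have "\<dots> \<le> card ({a..<Suc b - m} \<union> {a + m + 1..b})"
    using sigma_star_cycle_next[OF N] by (intro card_mono) (auto split: if_splits)
  also have "\<dots> \<le> (Suc b - m - a) + (b - m - a)"
    using card_Un_le[of "{a..<Suc b - m}" "{a + m + 1..b}"] by simp
  finally show ?thesis .
qed

theorem proposition3:
  fixes N :: nat and p :: real and r :: "nat \<Rightarrow> real"
  assumes "N \<ge> 3" and "odd N" and "p < 0"
    and "\<And>i. 1 \<le> i \<Longrightarrow> i \<le> N \<Longrightarrow> 0 \<le> r i \<and> r i \<le> 1"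
    and "\<And>i j. 1 \<le> i \<Longrightarrow> i < j \<Longrightarrow> j \<le> N \<Longrightarrow> r i < r j"
  shows "sigma_star N permutes {1..N}
    \<and> (\<forall>\<tau>. \<tau> permutes {1..N} \<longrightarrow> cycle_cost N p r (sigma_star N) \<le> cycle_cost N p r \<tau>)"
proof -
  obtain m where N: "N = 2*m + 1" using \<open>odd N\<close> oddE by blast
  have \<sigma>: "sigma_star N permutes {1..N}" using \<open>odd N\<close> by (rule sigma_star_permutes)
  let ?\<mu> = "mixed_diff (interval_weight N (edge_weight p r))"
  have cost: "cycle_cost N p r g = (\<Sum>a = 1..N. \<Sum>b \<in> {a<..N}. ?\<mu> a b * edges_within N g a b)"
    if "g permutes {1..N}" for g
    using cycle_sum_eq_sum_mixed_diff[of "edge_weight p r" g N] permutes_imp_bij[OF that] \<open>N \<ge> 3\<close>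
    by (simp add: cycle_cost_def cycle_next_def edge_weight_def abs_minus_commute)
  have \<mu>_nonneg: "0 \<le> ?\<mu> a b" if "a \<in> {1..N}" "b \<in> {a<..N}" for a b
  proof -
    have "edge_weight p r = (\<lambda>i j. (\<lambda>x. x powr p) \<bar>r i - r j\<bar>)"
      by (simp add: fun_eq_iff edge_weight_def)
    then show ?thesis
      using that assms(3,5) powr_convex_nonpos[of p]
      by (simp only:) (intro mixed_diff_interval_weight_nonneg powr_mono2'; simp)
  qed
  have "cycle_cost N p r (sigma_star N) \<le> cycle_cost N p r \<tau>" if \<tau>: "\<tau> permutes {1..N}" for \<tau>
  proof -
    have "edges_within N (sigma_star N) a b \<le> edges_within N \<tau> a b"
      if "a \<in> {1..N}" "b \<in> {a<..N}" for a b
      using edges_within_sigma_star[OF N, of a b] that N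
        edges_within_lower_bound[OF permutes_imp_bij[OF \<tau>], of a b]
      by auto
    with \<mu>_nonneg show ?thesis
      unfolding cost[OF \<sigma>] cost[OF \<tau>] by (intro sum_mono mult_left_mono) auto
  qed
  with \<sigma> show ?thesis by blast
qed

end
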